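(* Let $1 \le q \le w$ be integers and let $Q$ be a subset of $[w]$ of size $q$. Let $Y$ and $Z$ be two finite totally ordered sets and let $A_1,\ldots, A_r$ be $q$-element subsets of $Y$. If $|Z| \ge |Y| + r(w-q)$, then there exist an injection $\pi\colon Y \to Z$ and $r$ subsets $W_1,\ldots, W_r$ of $Z$, each of size $w$, such that for every $i \in [r]$, $Q$ selects $\pi(A_i)$ in $W_i$. Moreover, one can further require that $W_i \cap W_j = \pi(A_i \cap A_j)$ for any $i\neq j\in[r]$.
   Context: $[w]=\{1,\dots,w\}$. If $e_1<e_2<\dots<e_w$ are the elements of a totally ordered set $W$ and $Q\subseteq[w]$, the subset selected by $Q$ in $W$ is $\{e_i : i\in Q\}$. For a map $\pi$ and a set $A$, $\pi(A)=\{\pi(a):a\in A\}$. *)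

theory Defs
  imports Main
begin

definition selected :: "nat set \<Rightarrow> 'a::linorder set \<Rightarrow> 'a set" where
  "selected Q W = {sorted_list_of_set W ! (i - 1) | i. i \<in> Q \<and> 1 \<le> i \<and> i \<le> card W}"

end

theory Submission
  imports Defs "HOL-Library.Option_ord" "HOL-Library.Product_Lexorder"
begin

text \<open>
  First solve the problem inside an auxiliary ordered set: take Y and, for every window i and
  every position p \<in> [w] - Q, add a fresh point private to window i, placed immediately after
  the element of A_i occupying the last position of Q before p. The i-th window then
  consists of A_i and its w - q fresh points in the right order, so Q selects A_i in it,
  and two windows share only points of Y. This auxiliary set has at most |Y| + r(w - q) \<le> |Z|
  elements, hence embeds order-preservingly into Z, and an order embedding preserves sizes,
  intersections and selected subsets.
\<close>

definition rank :: "'a::linorder set \<Rightarrow> 'a \<Rightarrow> nat" where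
  "rank X x = card {y \<in> X. y \<le> x}"

lemma rank_mono:
  assumes "finite X" "x \<le> x'"
  shows "rank X x \<le> rank X x'"
  unfolding rank_def using assms by (intro card_mono) auto

lemma rank_strict_mono:
  assumes "finite X" "x < x'" "x' \<in> X"
  shows "rank X x < rank X x'"
proof -
  have "{y \<in> X. y \<le> x} \<subset> {y \<in> X. y \<le> x'}"
    using assms by (auto simp: psubset_eq set_eq_iff) (use leD in blast)
  then show ?thesis
    unfolding rank_def using assms(1) by (simp add: psubset_card_mono)
qed

lemma rank_le_card: "finite X \<Longrightarrow> rank X x \<le> card X"
  unfolding rank_def by (intro card_mono) auto

lemma strict_mono_on_nth:
  "sorted_wrt (<) xs \<Longrightarrow> strict_mono_on {..<length xs} (nth xs)"
  by (intro strict_mono_onI) (simp add: sorted_wrt_nth_less)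

lemma sorted_list_of_set_nth_image:
  assumes "finite X"
  shows "nth (sorted_list_of_set X) ` {..<card X} = X"
proof -
  have "nth xs ` {..<length xs} = set xs" for xs :: "'a list"
    by (auto simp: in_set_conv_nth)
  from this[of "sorted_list_of_set X"] show ?thesis
    using assms by simp
qed

lemma rank_sorted_list_of_set_nth:
  assumes "finite X" "k < card X"
  shows "rank X (sorted_list_of_set X ! k) = Suc k"
proof -
  let ?s = "sorted_list_of_set X"
  note X = sorted_list_of_set_nth_image[OF assms(1)]
  have "{y \<in> X. y \<le> ?s ! k} = nth ?s ` {..k}"
  proof (intro equalityI subsetI)
    fix y assume y: "y \<in> {y \<in> X. y \<le> ?s ! k}"
    then obtain j where j: "j < card X" "y = ?s ! j"
      using X by (metis (no_types, lifting) imageE lessThan_iff mem_Collect_eq)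
    have "j \<le> k"
      using y j assms sorted_wrt_nth_less[OF strict_sorted_list_of_set, of k j X] by force
    with j show "y \<in> nth ?s ` {..k}" by blast
  next
    fix y assume "y \<in> nth ?s ` {..k}"
    then obtain j where j: "j \<le> k" "y = ?s ! j" by blast
    then have "y \<in> X"
      using X assms(2) by force
    with j assms show "y \<in> {y \<in> X. y \<le> ?s ! k}"
      using sorted_nth_mono[OF sorted_sorted_list_of_set, of j k X] by simp
  qed
  moreover have "inj_on (nth ?s) {..k}"
    using assms by (intro inj_on_nth) auto
  ultimately show ?thesis
    unfolding rank_def by (simp add: card_image)
qed

lemma rank_image_eq:
  assumes "finite X"
  shows "rank X ` X = {1..card X}"
proof -
  note X = sorted_list_of_set_nth_image[OF assms, symmetric]
  have "rank X ` X = Suc ` {..<card X}"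
    using assms by (subst (2) X) (simp add: image_image rank_sorted_list_of_set_nth)
  also have "\<dots> = {1..card X}"
    by (simp add: lessThan_atLeast0 image_Suc_atLeastLessThan atLeastLessThanSuc_atLeastAtMost)
  finally show ?thesis .
qed

lemma selected_eq_rank:
  assumes "finite X"
  shows "selected Q X = {x \<in> X. rank X x \<in> Q}"
  unfolding selected_def
proof safe
  let ?s = "sorted_list_of_set X"
  note X = sorted_list_of_set_nth_image[OF assms]
  fix i assume i: "i \<in> Q" "1 \<le> i" "i \<le> card X"
  then show "?s ! (i - 1) \<in> X"
    using X by force
  show "rank X (?s ! (i - 1)) \<in> Q"
    using i rank_sorted_list_of_set_nth[OF assms, of "i - 1"] by simp
next
  let ?s = "sorted_list_of_set X"
  fix x assume x: "x \<in> X" "rank X x \<in> Q"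
  then obtain k where k: "k < card X" "x = ?s ! k"
    using sorted_list_of_set_nth_image[OF assms] by (metis imageE lessThan_iff)
  with x show "\<exists>i. x = ?s ! (i - 1) \<and> i \<in> Q \<and> 1 \<le> i \<and> i \<le> card X"
    using rank_sorted_list_of_set_nth[OF assms] by (intro exI[of _ "Suc k"]) auto
qed

lemma rank_image:
  assumes "finite X" "strict_mono_on X f" "x \<in> X"
  shows "rank (f ` X) (f x) = rank X x"
proof -
  have "{z \<in> f ` X. z \<le> f x} = f ` {y \<in> X. y \<le> x}"
    using assms(2,3) by (auto simp: strict_mono_on_less_eq)
  moreover have "inj_on f {y \<in> X. y \<le> x}"
    using strict_mono_on_imp_inj_on[OF assms(2)] by (rule inj_on_subset) auto
  ultimately show ?thesis
    unfolding rank_def by (simp add: card_image)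
qed

lemma selected_image:
  assumes "finite X" "strict_mono_on X f"
  shows "selected Q (f ` X) = f ` selected Q X"
  using assms by (auto simp: selected_eq_rank rank_image)

lemma selected_atLeastAtMost:
  assumes "Q \<subseteq> {1..w}"
  shows "selected Q {1..w} = Q"
proof -
  have "rank {1..w} p = p" if "p \<in> {1..w}" for p
  proof -
    have "{y \<in> {1..w}. y \<le> p} = {1..p}"
      using that by auto
    then show ?thesis
      unfolding rank_def by simp
  qed
  then show ?thesis
    using assms by (auto simp: selected_eq_rank)
qed

lemma strict_mono_on_into:
  fixes X :: "'a::linorder set" and Z :: "'b::linorder set"
  assumes "finite X" "finite Z" "card X \<le> card Z"
  obtains h where "strict_mono_on X h" "h ` X \<subseteq> Z"
proof
  let ?h = "\<lambda>x. sorted_list_of_set Z ! (rank X x - 1)"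
  have rank_range: "1 \<le> rank X x" "rank X x \<le> card Z" if "x \<in> X" for x
    using that rank_image_eq[OF assms(1)] rank_le_card[OF assms(1)] assms(3) by (auto intro: le_trans)
  show "strict_mono_on X ?h"
  proof (rule strict_mono_onI)
    fix x y assume "x \<in> X" "y \<in> X" "x < y"
    then have "rank X x - 1 < rank X y - 1" "rank X y - 1 < card Z"
      using rank_strict_mono[OF assms(1)] rank_range by fastforce+
    then show "?h x < ?h y"
      using assms(2) by (simp add: sorted_wrt_nth_less)
  qed
  show "?h ` X \<subseteq> Z"
  proof
    fix z assume "z \<in> ?h ` X"
    then obtain x where "x \<in> X" "z = ?h x" by blast
    then show "z \<in> Z"
      using assms(2) rank_range nth_mem[of "rank X x - 1" "sorted_list_of_set Z"] by fastforce
  qed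
qed

text \<open>
  The auxiliary order is the lexicographic order on 'a option \<times> nat \<times> nat. A point y of Y is
  (Some y, 0, 0); the fresh point at position p \<notin> Q of window i is (Some a, Suc i, p) for the
  element a of A at the last position of Q before p, or (None, Suc i, p) if there is none.
\<close>
definition frame :: "nat set \<Rightarrow> 'a::linorder set \<Rightarrow> nat \<Rightarrow> nat \<Rightarrow> 'a option \<times> nat \<times> nat" where
  "frame Q A i p = ((None # map Some (sorted_list_of_set A)) ! rank Q p,
                    if p \<in> Q then (0, 0) else (Suc i, p))"

lemma strict_mono_frame:
  assumes "finite Q" "finite A" "card A = card Q"
  shows "strict_mono (frame Q A i)"
proof (rule strict_monoI)
  fix p p' :: nat assume "p < p'"
  let ?L = "None # map Some (sorted_list_of_set A)"
  have L: "strict_mono_on {..card Q} (nth ?L)"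
    using strict_mono_on_nth[of ?L] assms by (simp add: sorted_wrt_map lessThan_Suc_atMost)
  have rank: "rank Q p \<le> rank Q p'" "rank Q p' \<le> card Q"
    using rank_mono[OF assms(1)] rank_le_card[OF assms(1)] \<open>p < p'\<close> by simp_all
  show "frame Q A i p < frame Q A i p'"
  proof (cases "rank Q p = rank Q p'")
    case True
    then have "p' \<notin> Q"
      using rank_strict_mono[OF assms(1) \<open>p < p'\<close>] by auto
    with True \<open>p < p'\<close> show ?thesis
      by (simp add: frame_def)
  next
    case False
    with rank have "?L ! rank Q p < ?L ! rank Q p'"
      by (intro strict_mono_onD[OF L]) simp_all
    then show ?thesis
      by (simp add: frame_def)
  qed
qed

lemma frame_image:
  assumes "finite Q" "finite A" "card A = card Q"
  shows "frame Q A i ` Q = (\<lambda>y. (Some y, 0, 0)) ` A"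
proof -
  let ?s = "sorted_list_of_set A"
  have "frame Q A i ` Q = (\<lambda>k. ((None # map Some ?s) ! k, 0, 0)) ` rank Q ` Q"
    by (auto simp: frame_def image_image)
  also have "rank Q ` Q = Suc ` {..<card A}"
    using rank_image_eq[OF assms(1)] assms(3)
    by (simp add: lessThan_atLeast0 image_Suc_atLeastLessThan atLeastLessThanSuc_atLeastAtMost)
  also have "(\<lambda>k. ((None # map Some ?s) ! k, 0, 0)) ` Suc ` {..<card A}
      = (\<lambda>y. (Some y, 0, 0)) ` nth ?s ` {..<card A}"
    using assms(2) by (simp add: image_image)
  also have "\<dots> = (\<lambda>y. (Some y, 0, 0)) ` A"
    by (simp only: sorted_list_of_set_nth_image[OF assms(2)])
  finally show ?thesis .
qed

lemma frame_image_split: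
  assumes "finite Q" "Q \<subseteq> P" "finite A" "card A = card Q"
  shows "frame Q A i ` P = (\<lambda>y. (Some y, 0, 0)) ` A \<union> frame Q A i ` (P - Q)"
  using frame_image[OF assms(1,3,4), of i] assms(2) by (metis Diff_partition image_Un)

lemma frame_image_Int:
  assumes "finite Q" "Q \<subseteq> P" "i \<noteq> j"
    and "finite A" "card A = card Q" "finite B" "card B = card Q"
  shows "frame Q A i ` P \<inter> frame Q B j ` P = (\<lambda>y. (Some y, 0, 0)) ` (A \<inter> B)"
proof -
  have fresh: "frame Q C k ` (P - Q) \<inter> range (\<lambda>y. (Some y, 0, 0)) = {}" for C :: "'a set" and k
    by (auto simp: frame_def)
  have disjoint: "frame Q A i ` (P - Q) \<inter> frame Q B j ` (P - Q) = {}"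
    using assms(3) by (auto simp: frame_def)
  have Un_Int_cancel: "(X \<union> F) \<inter> (X' \<union> G) = X \<inter> X'"
    if "F \<inter> R = {}" "G \<inter> R = {}" "F \<inter> G = {}" "X \<subseteq> R" "X' \<subseteq> R" for X X' F G R :: "'c set"
    using that by blast
  have "frame Q A i ` P \<inter> frame Q B j ` P = (\<lambda>y. (Some y, 0, 0)) ` A \<inter> (\<lambda>y. (Some y, 0, 0)) ` B"
    unfolding frame_image_split[OF assms(1,2,4,5)] frame_image_split[OF assms(1,2,6,7)]
    by (rule Un_Int_cancel[OF fresh fresh disjoint]) auto
  also have "\<dots> = (\<lambda>y. (Some y, 0, 0)) ` (A \<inter> B)"
    by (simp add: image_Int inj_def)
  finally show ?thesis .
qed

lemma frame_atLeastAtMost: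
  assumes "Q \<subseteq> {1..w}" "finite A" "card A = card Q"
  shows "card (frame Q A i ` {1..w}) = w"
    and "selected Q (frame Q A i ` {1..w}) = (\<lambda>y. (Some y, 0, 0)) ` A"
proof -
  have Q: "finite Q"
    using assms(1) finite_subset by blast
  have mono: "strict_mono_on {1..w} (frame Q A i)"
    using monotone_on_subset[OF strict_mono_frame[OF Q assms(2,3)] subset_UNIV] .
  show "card (frame Q A i ` {1..w}) = w"
    using card_image[OF strict_mono_on_imp_inj_on[OF mono]] by simp
  show "selected Q (frame Q A i ` {1..w}) = (\<lambda>y. (Some y, 0, 0)) ` A"
    using selected_image[OF _ mono] selected_atLeastAtMost[OF assms(1)] frame_image[OF Q assms(2,3)]
    by simp
qed

lemma card_frames_le:
  fixes Y :: "'a::linorder set" and A :: "nat \<Rightarrow> 'a set"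
  assumes "finite Y" "finite P" "finite I"
  shows "card ((\<lambda>y. (Some y, 0::nat, 0::nat)) ` Y \<union> (\<Union>i\<in>I. frame Q (A i) i ` (P - Q)))
    \<le> card Y + card I * card (P - Q)"
proof -
  have "card ((\<lambda>y. (Some y, 0::nat, 0::nat)) ` Y \<union> (\<Union>i\<in>I. frame Q (A i) i ` (P - Q)))
      \<le> card ((\<lambda>y. (Some y, 0::nat, 0::nat)) ` Y) + (\<Sum>i\<in>I. card (frame Q (A i) i ` (P - Q)))"
    using assms by (intro card_Un_le[THEN le_trans] add_mono card_UN_le) auto
  also have "\<dots> \<le> card Y + (\<Sum>i\<in>I. card (P - Q))"
    using assms by (intro add_mono sum_mono card_image_le) auto
  finally show ?thesis
    by simp
qed

theorem lemma29:
  fixes q w r :: nat and Q :: "nat set"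
    and Y :: "'a::linorder set" and Z :: "'b::linorder set"
    and A :: "nat \<Rightarrow> 'a set"
  assumes "1 \<le> q" and "q \<le> w"
    and "Q \<subseteq> {1..w}" and "card Q = q"
    and "finite Y" and "finite Z"
    and "\<forall>i\<in>{1..r}. A i \<subseteq> Y \<and> card (A i) = q"
    and "card Z \<ge> card Y + r * (w - q)"
  shows "\<exists>\<pi> W. inj_on \<pi> Y \<and> \<pi> ` Y \<subseteq> Z
           \<and> (\<forall>i\<in>{1..r}. W i \<subseteq> Z \<and> card (W i) = w
                \<and> selected Q (W i) = \<pi> ` (A i))
           \<and> (\<forall>i\<in>{1..r}. \<forall>j\<in>{1..r}. i \<noteq> j \<longrightarrow> W i \<inter> W j = \<pi> ` (A i \<inter> A j))"
proof -
  let ?e = "\<lambda>y. (Some y, 0::nat, 0::nat)"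
  let ?W = "\<lambda>i. frame Q (A i) i ` {1..w}"
  define S where "S = ?e ` Y \<union> (\<Union>i\<in>{1..r}. frame Q (A i) i ` ({1..w} - Q))"
  have Q: "finite Q" "card ({1..w} - Q) = w - q"
    using assms(3,4) finite_subset[OF assms(3)] by (auto simp: card_Diff_subset)
  have A: "finite (A i)" "card (A i) = card Q" "A i \<subseteq> Y" if "i \<in> {1..r}" for i
    using assms(4,5,7) that finite_subset[OF _ assms(5)] by auto
  have W_S: "?W i \<subseteq> S" if "i \<in> {1..r}" for i
    unfolding S_def frame_image_split[OF Q(1) assms(3) A(1,2)[OF that]]
    using A(3)[OF that] that by (intro Un_mono image_mono UN_upper)
  have "finite S" "card S \<le> card Z"
    using card_frames_le[OF assms(5), of "{1..w}" "{1..r}" Q A] Q(2) assms(5,8)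
    unfolding S_def by simp_all
  then obtain h where h: "strict_mono_on S h" "h ` S \<subseteq> Z"
    using strict_mono_on_into[OF _ assms(6)] by blast
  have h_inj: "inj_on h S"
    using strict_mono_on_imp_inj_on[OF h(1)] .
  have e_S: "?e ` Y \<subseteq> S"
    unfolding S_def by blast
  show ?thesis
  proof (intro exI[of _ "h \<circ> ?e"] exI[of _ "\<lambda>i. h ` ?W i"] conjI ballI impI)
    show "inj_on (h \<circ> ?e) Y"
      by (rule comp_inj_on) (auto intro: inj_onI inj_on_subset[OF h_inj e_S])
    show "(h \<circ> ?e) ` Y \<subseteq> Z"
      using h(2) e_S by (auto simp flip: image_comp)
  next
    fix i assume i: "i \<in> {1..r}"
    show "h ` ?W i \<subseteq> Z"
      using W_S[OF i] h(2) by blast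
    show "card (h ` ?W i) = w"
      using card_image[OF inj_on_subset[OF h_inj W_S[OF i]]] frame_atLeastAtMost(1)[OF assms(3) A(1,2)[OF i]]
      by simp
    show "selected Q (h ` ?W i) = (h \<circ> ?e) ` A i"
      using selected_image[OF _ monotone_on_subset[OF h(1) W_S[OF i]]]
        frame_atLeastAtMost(2)[OF assms(3) A(1,2)[OF i]] by (simp add: image_comp)
  next
    fix i j assume ij: "i \<in> {1..r}" "j \<in> {1..r}" "i \<noteq> j"
    show "h ` ?W i \<inter> h ` ?W j = (h \<circ> ?e) ` (A i \<inter> A j)"
      using inj_on_image_Int[OF h_inj W_S[OF ij(1)] W_S[OF ij(2)]]
        frame_image_Int[OF Q(1) assms(3) ij(3) A(1,2)[OF ij(1)] A(1,2)[OF ij(2)]]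
      by (simp add: image_comp)
  qed
qed

end
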